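(* The morphism $p_\Delta:\widetilde{U}_\Delta\to U_\Delta$ in $\mathbf{Gpd}^{\mathbf{G}}$ is an injective fibration.
   Context: $\mathbf{Gpd}^{\mathbf{G}}$ is the category of groupoids equipped with an involution and involution-preserving functors; its injective fibrations are the morphisms having the right lifting property with respect to all morphisms whose underlying functor is injective on objects and an equivalence of groupoids. $\kappa$ is an inaccessible cardinal. $U_\Delta$: objects $(A_0,A_1,\varphi)$ with $A_0,A_1$ sets of cardinality $<\kappa$ and $\varphi:A_0\to A_1$ a bijection; morphisms $(A_0,A_1,\varphi)\to(B_0,B_1,\psi)$ are pairs of bijections $(\rho_0,\rho_1)$ with $\psi\rho_0=\rho_1\varphi$; involution $(A_0,A_1,\varphi)\mapsto(A_1,A_0,\varphi^{-1})$, $(\rho_0,\rho_1)\mapsto(\rho_1,\rho_0)$. $\widetilde{U}_\Delta$: objects $(A_0,A_1,a,\varphi)$ with $a\in A_0$; morphisms those $(\rho_0,\rho_1)$ with $\rho_0(a)=b$; involution $(A_0,A_1,a,\varphi)\mapsto(A_1,A_0,\varphi(a),\varphi^{-1})$, $(\rho_0,\rho_1)\mapsto(\rho_1,\rho_0)$. $p_\Delta$ forgets the point $a$. *)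

theory Defs
  imports "HOL-Library.FuncSet"
begin

text \<open>A (possibly large, i.e. carrier-relativised) category: objects, arrows, domain,
  codomain, composition (gcomp g f = g after f) and identities.\<close>

record ('o, 'a) gpd =
  gob :: "'o set"
  gar :: "'a set"
  gdom :: "'a \<Rightarrow> 'o"
  gcod :: "'a \<Rightarrow> 'o"
  gcomp :: "'a \<Rightarrow> 'a \<Rightarrow> 'a"
  gid :: "'o \<Rightarrow> 'a"

text \<open>A groupoid equipped with an involution: sob/sar are the object and arrow parts
  of the involution functor.\<close>

record ('o, 'a) igpd = "('o, 'a) gpd" +
  sob :: "'o \<Rightarrow> 'o"
  sar :: "'a \<Rightarrow> 'a"

definition ghom where
  "ghom G x y = {f \<in> gar G. gdom G f = x \<and> gcod G f = y}"

definition groupoid where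
  "groupoid G \<longleftrightarrow>
     (\<forall>f \<in> gar G. gdom G f \<in> gob G \<and> gcod G f \<in> gob G) \<and>
     (\<forall>x \<in> gob G. gid G x \<in> ghom G x x) \<and>
     (\<forall>f \<in> gar G. \<forall>g \<in> gar G. gcod G f = gdom G g \<longrightarrow>
        gcomp G g f \<in> ghom G (gdom G f) (gcod G g)) \<and>
     (\<forall>f \<in> gar G. \<forall>g \<in> gar G. \<forall>h \<in> gar G. gcod G f = gdom G g \<longrightarrow> gcod G g = gdom G h \<longrightarrow>
        gcomp G h (gcomp G g f) = gcomp G (gcomp G h g) f) \<and>
     (\<forall>f \<in> gar G. gcomp G (gid G (gcod G f)) f = f \<and> gcomp G f (gid G (gdom G f)) = f) \<and>
     (\<forall>f \<in> gar G. \<exists>g \<in> ghom G (gcod G f) (gdom G f).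
        gcomp G g f = gid G (gdom G f) \<and> gcomp G f g = gid G (gcod G f))"

text \<open>Functors are pairs (object map, arrow map), considered on carriers only.\<close>

definition is_functor where
  "is_functor G H F \<longleftrightarrow>
     (\<forall>x \<in> gob G. fst F x \<in> gob H) \<and>
     (\<forall>f \<in> gar G. snd F f \<in> ghom H (fst F (gdom G f)) (fst F (gcod G f))) \<and>
     (\<forall>f \<in> gar G. \<forall>g \<in> gar G. gcod G f = gdom G g \<longrightarrow>
        snd F (gcomp G g f) = gcomp H (snd F g) (snd F f)) \<and>
     (\<forall>x \<in> gob G. snd F (gid G x) = gid H (fst F x))"

definition fcomp :: "('b \<Rightarrow> 'c) \<times> ('bb \<Rightarrow> 'cc) \<Rightarrow> ('a \<Rightarrow> 'b) \<times> ('aa \<Rightarrow> 'bb)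
    \<Rightarrow> ('a \<Rightarrow> 'c) \<times> ('aa \<Rightarrow> 'cc)" where
  "fcomp K F = (fst K \<circ> fst F, snd K \<circ> snd F)"

definition nat_iso where
  "nat_iso G H F1 F2 eta \<longleftrightarrow>
     (\<forall>x \<in> gob G. eta x \<in> ghom H (fst F1 x) (fst F2 x)) \<and>
     (\<forall>f \<in> gar G. gcomp H (eta (gcod G f)) (snd F1 f) = gcomp H (snd F2 f) (eta (gdom G f)))"

definition gpd_equivalence where
  "gpd_equivalence G H F \<longleftrightarrow> is_functor G H F \<and>
     (\<exists>K. is_functor H G K \<and>
        (\<exists>eta. nat_iso G G (id, id) (fcomp K F) eta) \<and>
        (\<exists>eps. nat_iso H H (fcomp F K) (id, id) eps))"

definition igroupoid where
  "igroupoid G \<longleftrightarrow> groupoid G \<and> is_functor G G (sob G, sar G) \<and>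
     (\<forall>x \<in> gob G. sob G (sob G x) = x) \<and> (\<forall>f \<in> gar G. sar G (sar G f) = f)"

definition igpd_mor where
  "igpd_mor G H F \<longleftrightarrow> igroupoid G \<and> igroupoid H \<and> is_functor G H F \<and>
     (\<forall>x \<in> gob G. fst F (sob G x) = sob H (fst F x)) \<and>
     (\<forall>f \<in> gar G. snd F (sar G f) = sar H (snd F f))"

text \<open>The generating class: morphisms whose underlying functor is injective on objects
  and an equivalence of groupoids.\<close>

definition inj_equiv where
  "inj_equiv A B i \<longleftrightarrow> igpd_mor A B i \<and> inj_on (fst i) (gob A) \<and> gpd_equivalence A B i"

definition has_rlp where
  "has_rlp A B i E X p \<longleftrightarrow>
     (\<forall>u v. igpd_mor A E u \<longrightarrow> igpd_mor B X v \<longrightarrow>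
        (\<forall>x \<in> gob A. fst p (fst u x) = fst v (fst i x)) \<longrightarrow>
        (\<forall>f \<in> gar A. snd p (snd u f) = snd v (snd i f)) \<longrightarrow>
        (\<exists>h. igpd_mor B E h \<and>
           (\<forall>x \<in> gob A. fst h (fst i x) = fst u x) \<and>
           (\<forall>f \<in> gar A. snd h (snd i f) = snd u f) \<and>
           (\<forall>y \<in> gob B. fst p (fst h y) = fst v y) \<and>
           (\<forall>g \<in> gar B. snd p (snd h g) = snd v g)))"

definition inaccessible :: "'k rel \<Rightarrow> bool" where
  "inaccessible \<kappa> \<longleftrightarrow> Card_order \<kappa> \<and> ordLess2 natLeq \<kappa> \<and> regularCard \<kappa> \<and>
     (\<forall>X. X \<subseteq> Field \<kappa> \<and> ordLess2 (card_of X) \<kappa> \<longrightarrow> ordLess2 (card_of (Pow X)) \<kappa>)"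

text \<open>Elements of the sets A0, A1 are taken from an arbitrary type 'u. Bijections are
  represented by functions that are extensional (undefined off their domain), so that
  equal bijections are equal functions.\<close>

type_synonym 'u uobj = "'u set \<times> 'u set \<times> ('u \<Rightarrow> 'u)"
type_synonym 'u uarr = "'u uobj \<times> 'u uobj \<times> ('u \<Rightarrow> 'u) \<times> ('u \<Rightarrow> 'u)"
type_synonym 'u tobj = "'u set \<times> 'u set \<times> 'u \<times> ('u \<Rightarrow> 'u)"
type_synonym 'u tarr = "'u tobj \<times> 'u tobj \<times> ('u \<Rightarrow> 'u) \<times> ('u \<Rightarrow> 'u)"

definition U_ob :: "'k rel \<Rightarrow> 'u uobj set" where
  "U_ob \<kappa> = {(A0, A1, \<phi>). ordLess2 (card_of A0) \<kappa> \<and> ordLess2 (card_of A1) \<kappa> \<and> bij_betw \<phi> A0 A1 \<and> \<phi> \<in> extensional A0}"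

definition U_mor :: "'u uobj \<Rightarrow> 'u uobj \<Rightarrow> ('u \<Rightarrow> 'u) \<Rightarrow> ('u \<Rightarrow> 'u) \<Rightarrow> bool" where
  "U_mor X Y r0 r1 \<longleftrightarrow> (case X of (A0, A1, \<phi>) \<Rightarrow> case Y of (B0, B1, \<psi>) \<Rightarrow>
     bij_betw r0 A0 B0 \<and> r0 \<in> extensional A0 \<and> bij_betw r1 A1 B1 \<and> r1 \<in> extensional A1 \<and>
     (\<forall>x \<in> A0. \<psi> (r0 x) = r1 (\<phi> x)))"

definition U_ar :: "'k rel \<Rightarrow> 'u uarr set" where
  "U_ar \<kappa> = {(X, Y, r0, r1). X \<in> U_ob \<kappa> \<and> Y \<in> U_ob \<kappa> \<and> U_mor X Y r0 r1}"

definition U_sob :: "'u uobj \<Rightarrow> 'u uobj" where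
  "U_sob X = (case X of (A0, A1, \<phi>) \<Rightarrow> (A1, A0, restrict (inv_into A0 \<phi>) A1))"

definition U_Delta :: "'k rel \<Rightarrow> ('u uobj, 'u uarr) igpd" where
  "U_Delta \<kappa> = \<lparr> gob = U_ob \<kappa>, gar = U_ar \<kappa>,
     gdom = (\<lambda>(X, Y, r0, r1). X), gcod = (\<lambda>(X, Y, r0, r1). Y),
     gcomp = (\<lambda>(Y', Z, s0, s1) (X, Y, r0, r1).
                (X, Z, restrict (s0 \<circ> r0) (fst X), restrict (s1 \<circ> r1) (fst (snd X)))),
     gid = (\<lambda>X. (X, X, restrict id (fst X), restrict id (fst (snd X)))),
     sob = U_sob,
     sar = (\<lambda>(X, Y, r0, r1). (U_sob X, U_sob Y, r1, r0)) \<rparr>"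

definition Ut_ob :: "'k rel \<Rightarrow> 'u tobj set" where
  "Ut_ob \<kappa> = {(A0, A1, a, \<phi>). (A0, A1, \<phi>) \<in> U_ob \<kappa> \<and> a \<in> A0}"

definition Ut_ar :: "'k rel \<Rightarrow> 'u tarr set" where
  "Ut_ar \<kappa> = {((A0, A1, a, \<phi>), (B0, B1, b, \<psi>), r0, r1).
       (A0, A1, a, \<phi>) \<in> Ut_ob \<kappa> \<and> (B0, B1, b, \<psi>) \<in> Ut_ob \<kappa> \<and>
       U_mor (A0, A1, \<phi>) (B0, B1, \<psi>) r0 r1 \<and> r0 a = b}"

definition Ut_sob :: "'u tobj \<Rightarrow> 'u tobj" where
  "Ut_sob X = (case X of (A0, A1, a, \<phi>) \<Rightarrow> (A1, A0, \<phi> a, restrict (inv_into A0 \<phi>) A1))"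

definition Ut_Delta :: "'k rel \<Rightarrow> ('u tobj, 'u tarr) igpd" where
  "Ut_Delta \<kappa> = \<lparr> gob = Ut_ob \<kappa>, gar = Ut_ar \<kappa>,
     gdom = (\<lambda>(X, Y, r0, r1). X), gcod = (\<lambda>(X, Y, r0, r1). Y),
     gcomp = (\<lambda>(Y', Z, s0, s1) (X, Y, r0, r1).
                (X, Z, restrict (s0 \<circ> r0) (fst X), restrict (s1 \<circ> r1) (fst (snd X)))),
     gid = (\<lambda>X. (X, X, restrict id (fst X), restrict id (fst (snd X)))),
     sob = Ut_sob,
     sar = (\<lambda>(X, Y, r0, r1). (Ut_sob X, Ut_sob Y, r1, r0)) \<rparr>"

definition forget_pt :: "'u tobj \<Rightarrow> 'u uobj" where
  "forget_pt X = (case X of (A0, A1, a, \<phi>) \<Rightarrow> (A0, A1, \<phi>))"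

definition p_Delta :: "('u tobj \<Rightarrow> 'u uobj) \<times> ('u tarr \<Rightarrow> 'u uarr)" where
  "p_Delta = (forget_pt, (\<lambda>(X, Y, r0, r1). (forget_pt X, forget_pt Y, r0, r1)))"

end

theory Submission
  imports Defs
begin

text \<open>Over a point of U_Delta, i.e. an object (A0, A1, phi), the fibre of p_Delta is the set A0,
  and an arrow (rho0, rho1) transports points uniquely by rho0; so p_Delta behaves like a
  covering. Given a square u, v with i an equivalence, choose for every object y of B an arrow
  e y : i (src y) -> y and lift v at y by transporting the point of u (src y) along v (e y). Since
  i is full, every arrow i x -> y factors through e y and an arrow of A, so the transported point
  does not depend on this choice; this makes the lift a functor compatible with the involution
  that extends u.\<close>

lemma ghom_iff: "f \<in> ghom G x y \<longleftrightarrow> f \<in> gar G \<and> gdom G f = x \<and> gcod G f = y"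
  by (simp add: ghom_def)

lemma ghom_gdom_gcod: "f \<in> gar G \<Longrightarrow> f \<in> ghom G (gdom G f) (gcod G f)"
  by (simp add: ghom_def)

lemma groupoid_hom_obs: "groupoid G \<Longrightarrow> f \<in> ghom G x y \<Longrightarrow> x \<in> gob G \<and> y \<in> gob G"
  unfolding groupoid_def ghom_def by auto

lemma groupoid_id_hom: "groupoid G \<Longrightarrow> x \<in> gob G \<Longrightarrow> gid G x \<in> ghom G x x"
  unfolding groupoid_def by auto

lemma groupoid_comp_hom:
  "groupoid G \<Longrightarrow> f \<in> ghom G x y \<Longrightarrow> g \<in> ghom G y z \<Longrightarrow> gcomp G g f \<in> ghom G x z"
  unfolding groupoid_def ghom_def by auto

lemma groupoid_assoc:
  "groupoid G \<Longrightarrow> f \<in> ghom G w x \<Longrightarrow> g \<in> ghom G x y \<Longrightarrow> h \<in> ghom G y z \<Longrightarrow>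
   gcomp G h (gcomp G g f) = gcomp G (gcomp G h g) f"
  unfolding groupoid_def ghom_def by auto

lemma groupoid_id_left: "groupoid G \<Longrightarrow> f \<in> ghom G x y \<Longrightarrow> gcomp G (gid G y) f = f"
  unfolding groupoid_def ghom_def by auto

lemma groupoid_id_right: "groupoid G \<Longrightarrow> f \<in> ghom G x y \<Longrightarrow> gcomp G f (gid G x) = f"
  unfolding groupoid_def ghom_def by auto

lemma groupoid_inverse:
  "groupoid G \<Longrightarrow> f \<in> ghom G x y \<Longrightarrow>
   \<exists>g \<in> ghom G y x. gcomp G g f = gid G x \<and> gcomp G f g = gid G y"
  unfolding groupoid_def ghom_def by auto

lemma groupoid_cancel_right:
  assumes G: "groupoid G" and f: "f \<in> ghom G x y" and g: "g1 \<in> ghom G y z" "g2 \<in> ghom G y z"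
    and eq: "gcomp G g1 f = gcomp G g2 f"
  shows "g1 = g2"
proof -
  obtain f' where f': "f' \<in> ghom G y x" "gcomp G f f' = gid G y"
    using groupoid_inverse[OF G f] by blast
  have "g1 = gcomp G (gcomp G g1 f) f'"
    using groupoid_assoc[OF G f'(1) f g(1)] groupoid_id_right[OF G g(1)] f'(2) by simp
  also have "\<dots> = g2"
    using eq groupoid_assoc[OF G f'(1) f g(2)] groupoid_id_right[OF G g(2)] f'(2) by simp
  finally show ?thesis .
qed

lemma groupoid_cancel_left_inverse:
  assumes G: "groupoid G" and e: "e \<in> ghom G x y" and g: "g \<in> ghom G w y"
  obtains k where "k \<in> ghom G w x" "g = gcomp G e k"
proof -
  obtain e' where e': "e' \<in> ghom G y x" "gcomp G e e' = gid G y"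
    using groupoid_inverse[OF G e] by blast
  have "gcomp G e (gcomp G e' g) = g"
    using groupoid_assoc[OF G g e'(1) e] e'(2) groupoid_id_left[OF G g] by simp
  with that groupoid_comp_hom[OF G g e'(1)] show thesis by metis
qed

lemma functor_ob: "is_functor G H F \<Longrightarrow> x \<in> gob G \<Longrightarrow> fst F x \<in> gob H"
  unfolding is_functor_def by auto

lemma functor_hom: "is_functor G H F \<Longrightarrow> f \<in> ghom G x y \<Longrightarrow> snd F f \<in> ghom H (fst F x) (fst F y)"
  unfolding is_functor_def ghom_def by auto

lemma functor_comp:
  "is_functor G H F \<Longrightarrow> f \<in> ghom G x y \<Longrightarrow> g \<in> ghom G y z \<Longrightarrow>
   snd F (gcomp G g f) = gcomp H (snd F g) (snd F f)"
  unfolding is_functor_def ghom_def by auto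

lemma functor_id: "is_functor G H F \<Longrightarrow> x \<in> gob G \<Longrightarrow> snd F (gid G x) = gid H (fst F x)"
  unfolding is_functor_def by auto

lemma nat_iso_hom: "nat_iso G H F1 F2 \<eta> \<Longrightarrow> x \<in> gob G \<Longrightarrow> \<eta> x \<in> ghom H (fst F1 x) (fst F2 x)"
  unfolding nat_iso_def by auto

lemma nat_iso_natural:
  "nat_iso G H F1 F2 \<eta> \<Longrightarrow> f \<in> ghom G x y \<Longrightarrow> gcomp H (\<eta> y) (snd F1 f) = gcomp H (snd F2 f) (\<eta> x)"
  unfolding nat_iso_def ghom_def by auto

lemma fcomp_simps [simp]: "fst (fcomp K F) = fst K \<circ> fst F" "snd (fcomp K F) = snd K \<circ> snd F"
  by (simp_all add: fcomp_def)

definition full_functor where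
  "full_functor A B F \<longleftrightarrow> (\<forall>x \<in> gob A. \<forall>x' \<in> gob A. \<forall>f \<in> ghom B (fst F x) (fst F x').
     \<exists>k \<in> ghom A x x'. snd F k = f)"

lemma faithful_if_counit:
  assumes B: "groupoid B" and \<epsilon>: "nat_iso B B (fcomp F K) (id, id) \<epsilon>"
    and g: "g1 \<in> ghom B y y'" "g2 \<in> ghom B y y'" and eq: "snd K g1 = snd K g2"
  shows "g1 = g2"
proof (rule groupoid_cancel_right[OF B _ g])
  have "y \<in> gob B" using groupoid_hom_obs[OF B g(1)] by simp
  then show "\<epsilon> y \<in> ghom B (fst F (fst K y)) y" using nat_iso_hom[OF \<epsilon>] by simp
  show "gcomp B g1 (\<epsilon> y) = gcomp B g2 (\<epsilon> y)"
    using nat_iso_natural[OF \<epsilon> g(1)] nat_iso_natural[OF \<epsilon> g(2)] eq by simp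
qed

lemma equivalence_full:
  assumes A: "groupoid A" and B: "groupoid B" and F: "gpd_equivalence A B F"
  shows "full_functor A B F"
  unfolding full_functor_def
proof (intro ballI)
  fix x x' f assume x: "x \<in> gob A" "x' \<in> gob A" and f: "f \<in> ghom B (fst F x) (fst F x')"
  obtain K \<eta> \<epsilon> where FF: "is_functor A B F" and KF: "is_functor B A K"
    and \<eta>: "nat_iso A A (id, id) (fcomp K F) \<eta>" and \<epsilon>: "nat_iso B B (fcomp F K) (id, id) \<epsilon>"
    using F unfolding gpd_equivalence_def by blast
  have \<eta>x: "\<eta> x \<in> ghom A x (fst K (fst F x))" and \<eta>x': "\<eta> x' \<in> ghom A x' (fst K (fst F x'))"
    using nat_iso_hom[OF \<eta>] x by simp_all
  have "gcomp A (snd K f) (\<eta> x) \<in> ghom A x (fst K (fst F x'))"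
    using groupoid_comp_hom[OF A \<eta>x functor_hom[OF KF f]] .
  then obtain k where k: "k \<in> ghom A x x'" and "gcomp A (snd K f) (\<eta> x) = gcomp A (\<eta> x') k"
    by (rule groupoid_cancel_left_inverse[OF A \<eta>x'])
  then have "gcomp A (snd K (snd F k)) (\<eta> x) = gcomp A (snd K f) (\<eta> x)"
    using nat_iso_natural[OF \<eta> k] by simp
  then have "snd K (snd F k) = snd K f"
    by (rule groupoid_cancel_right[OF A \<eta>x functor_hom[OF KF functor_hom[OF FF k]] functor_hom[OF KF f]])
  then have "snd F k = f"
    using faithful_if_counit[OF B \<epsilon> functor_hom[OF FF k] f] by simp
  with k show "\<exists>k \<in> ghom A x x'. snd F k = f" by blast
qed

lemma restrict_comp_eq_compose: "restrict (g \<circ> f) A = compose A g f"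
  by (simp add: compose_def o_def)

lemma restrict_id_eq: "restrict id A = (\<lambda>x\<in>A. x)"
  by (simp add: id_def)

lemma restrict_inv_into_inv_into:
  assumes "bij_betw f A B" and "f \<in> extensional A"
  shows "restrict (inv_into B (restrict (inv_into A f) B)) A = f"
proof (rule extensionalityI[OF _ \<open>f \<in> extensional A\<close>])
  show "restrict (inv_into B (restrict (inv_into A f) B)) A \<in> extensional A" by simp
next
  fix x assume x: "x \<in> A"
  have "bij_betw (restrict (inv_into A f) B) B A"
    using assms(1) by (simp add: bij_betw_inv_into)
  moreover have "restrict (inv_into A f) B (f x) = x"
    using assms(1) x by (simp add: bij_betwE bij_betw_inv_into_left)
  moreover have "f x \<in> B" using assms(1) x by (simp add: bij_betwE)
  ultimately show "restrict (inv_into B (restrict (inv_into A f) B)) A x = f x"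
    using x by (metis bij_betw_inv_into_left restrict_apply')
qed

lemma inv_into_commute:
  assumes "f ` A = B" and "inj_on h C" and "g \<in> A \<rightarrow> C" and "\<forall>x\<in>A. k (f x) = h (g x)"
  shows "\<forall>y\<in>B. g (inv_into A f y) = inv_into C h (k y)"
proof
  fix y assume "y \<in> B"
  then have x: "inv_into A f y \<in> A" "f (inv_into A f y) = y"
    using assms(1) by (auto intro: inv_into_into f_inv_into_f)
  then have "k y = h (g (inv_into A f y))" using assms(4) by metis
  then show "g (inv_into A f y) = inv_into C h (k y)"
    using assms(2,3) x(1) by (simp add: Pi_iff)
qed

definition rho0 :: "'x \<times> 'y \<times> 'r \<times> 's \<Rightarrow> 'r" where "rho0 g = fst (snd (snd g))"
definition rho1 :: "'x \<times> 'y \<times> 'r \<times> 's \<Rightarrow> 's" where "rho1 g = snd (snd (snd g))"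

lemma rho_simps [simp]: "rho0 (X, Y, r0, r1) = r0" "rho1 (X, Y, r0, r1) = r1"
  by (simp_all add: rho0_def rho1_def)

text \<open>Both U_Delta and its pointed version are groupoids whose objects carry two sets and
  whose arrows are pairs of extensional bijections between them, singled out by a predicate M.\<close>

locale bijection_igroupoid =
  fixes G :: "('u set \<times> 'u set \<times> 'x,
              ('u set \<times> 'u set \<times> 'x) \<times> ('u set \<times> 'u set \<times> 'x) \<times> ('u \<Rightarrow> 'u) \<times> ('u \<Rightarrow> 'u), 'z) igpd_scheme"
    and M :: "'u set \<times> 'u set \<times> 'x \<Rightarrow> 'u set \<times> 'u set \<times> 'x \<Rightarrow> ('u \<Rightarrow> 'u) \<Rightarrow> ('u \<Rightarrow> 'u) \<Rightarrow> bool"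
  assumes gar_eq: "gar G = {(X, Y, r0, r1). X \<in> gob G \<and> Y \<in> gob G \<and> M X Y r0 r1}"
    and gdom_eq: "gdom G = (\<lambda>(X, Y, r0, r1). X)"
    and gcod_eq: "gcod G = (\<lambda>(X, Y, r0, r1). Y)"
    and gcomp_eq: "gcomp G = (\<lambda>(Y', Z, s0, s1) (X, Y, r0, r1).
                     (X, Z, compose (fst X) s0 r0, compose (fst (snd X)) s1 r1))"
    and gid_eq: "gid G = (\<lambda>X. (X, X, \<lambda>x\<in>fst X. x, \<lambda>x\<in>fst (snd X). x))"
    and sar_eq: "sar G = (\<lambda>(X, Y, r0, r1). (sob G X, sob G Y, r1, r0))"
    and M_bij: "M X Y r0 r1 \<Longrightarrow> bij_betw r0 (fst X) (fst Y) \<and> r0 \<in> extensional (fst X) \<and>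
                  bij_betw r1 (fst (snd X)) (fst (snd Y)) \<and> r1 \<in> extensional (fst (snd X))"
    and M_id: "X \<in> gob G \<Longrightarrow> M X X (\<lambda>x\<in>fst X. x) (\<lambda>x\<in>fst (snd X). x)"
    and M_comp: "X \<in> gob G \<Longrightarrow> M X Y r0 r1 \<Longrightarrow> M Y Z s0 s1 \<Longrightarrow>
                  M X Z (compose (fst X) s0 r0) (compose (fst (snd X)) s1 r1)"
    and M_inv: "X \<in> gob G \<Longrightarrow> M X Y r0 r1 \<Longrightarrow>
                  M Y X (\<lambda>y\<in>fst Y. inv_into (fst X) r0 y) (\<lambda>y\<in>fst (snd Y). inv_into (fst (snd X)) r1 y)"
    and sob_ob: "X \<in> gob G \<Longrightarrow> sob G X \<in> gob G"
    and sob_sob: "X \<in> gob G \<Longrightarrow> sob G (sob G X) = X"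
    and sob_fst: "fst (sob G X) = fst (snd X)" and sob_fst_snd: "fst (snd (sob G X)) = fst X"
    and M_sob: "X \<in> gob G \<Longrightarrow> Y \<in> gob G \<Longrightarrow> M X Y r0 r1 \<Longrightarrow> M (sob G X) (sob G Y) r1 r0"
begin

lemma M_funcset: "M X Y r0 r1 \<Longrightarrow> r0 \<in> fst X \<rightarrow> fst Y \<and> r1 \<in> fst (snd X) \<rightarrow> fst (snd Y)"
  using M_bij by (simp add: bij_betw_imp_funcset)

lemma gar_iff: "(X, Y, r0, r1) \<in> gar G \<longleftrightarrow> X \<in> gob G \<and> Y \<in> gob G \<and> M X Y r0 r1"
  by (simp add: gar_eq)

lemma garE:
  assumes "f \<in> gar G"
  obtains X Y r0 r1 where "f = (X, Y, r0, r1)" "X \<in> gob G" "Y \<in> gob G" "M X Y r0 r1"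
  using assms by (cases f) (auto simp: gar_iff)

lemma structure_simps [simp]:
  "gdom G (X, Y, r0, r1) = X" "gcod G (X, Y, r0, r1) = Y"
  "gcomp G (Y', Z, s0, s1) (X, Y, r0, r1) = (X, Z, compose (fst X) s0 r0, compose (fst (snd X)) s1 r1)"
  "sar G (X, Y, r0, r1) = (sob G X, sob G Y, r1, r0)"
  by (simp_all add: gdom_eq gcod_eq gcomp_eq sar_eq)

lemma groupoid: "groupoid G"
  unfolding groupoid_def ghom_def
proof (intro conjI ballI impI)
  fix f assume "f \<in> gar G"
  then show "gdom G f \<in> gob G" "gcod G f \<in> gob G" by (elim garE; simp)+
next
  fix X assume "X \<in> gob G"
  then show "gid G X \<in> {f \<in> gar G. gdom G f = X \<and> gcod G f = X}"
    by (simp add: gid_eq gar_iff M_id)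
next
  fix f g assume "f \<in> gar G" "g \<in> gar G" "gcod G f = gdom G g"
  then show "gcomp G g f \<in> {h \<in> gar G. gdom G h = gdom G f \<and> gcod G h = gcod G g}"
    by (elim garE) (auto simp: gar_iff intro: M_comp)
next
  fix f g h assume "f \<in> gar G" "g \<in> gar G" "h \<in> gar G"
    "gcod G f = gdom G g" "gcod G g = gdom G h"
  then show "gcomp G h (gcomp G g f) = gcomp G (gcomp G h g) f"
  proof (elim garE)
    fix X Y r0 r1 Y' Z s0 s1 Z' W t0 t1
    assume "f = (X, Y, r0, r1)" "M X Y r0 r1" "g = (Y', Z, s0, s1)" "M Y' Z s0 s1"
      "h = (Z', W, t0, t1)" "gcod G f = gdom G g" "gcod G g = gdom G h"
    then show ?thesis
      by (simp add: compose_assoc M_funcset)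
  qed
next
  fix f assume "f \<in> gar G"
  then obtain X Y r0 r1 where f: "f = (X, Y, r0, r1)" and "M X Y r0 r1" by (elim garE)
  then have "r0 \<in> fst X \<rightarrow> fst Y" "r0 \<in> extensional (fst X)"
    "r1 \<in> fst (snd X) \<rightarrow> fst (snd Y)" "r1 \<in> extensional (fst (snd X))"
    using M_bij M_funcset by blast+
  then show "gcomp G (gid G (gcod G f)) f = f" "gcomp G f (gid G (gdom G f)) = f"
    by (simp_all add: f gid_eq Id_compose compose_Id)
next
  fix f assume "f \<in> gar G"
  then show "\<exists>g \<in> {g \<in> gar G. gdom G g = gcod G f \<and> gcod G g = gdom G f}.
      gcomp G g f = gid G (gdom G f) \<and> gcomp G f g = gid G (gcod G f)"
  proof (elim garE)
    fix X Y r0 r1 assume f: "f = (X, Y, r0, r1)" and XY: "X \<in> gob G" "Y \<in> gob G" "M X Y r0 r1"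
    let ?g = "(Y, X, \<lambda>y\<in>fst Y. inv_into (fst X) r0 y, \<lambda>y\<in>fst (snd Y). inv_into (fst (snd X)) r1 y)"
    have "?g \<in> gar G" using XY by (simp add: gar_iff M_inv)
    moreover have "compose (fst X) (\<lambda>y\<in>fst Y. inv_into (fst X) r0 y) r0 = (\<lambda>x\<in>fst X. x)"
      "compose (fst (snd X)) (\<lambda>y\<in>fst (snd Y). inv_into (fst (snd X)) r1 y) r1 = (\<lambda>x\<in>fst (snd X). x)"
      "compose (fst Y) r0 (\<lambda>y\<in>fst Y. inv_into (fst X) r0 y) = (\<lambda>x\<in>fst Y. x)"
      "compose (fst (snd Y)) r1 (\<lambda>y\<in>fst (snd Y). inv_into (fst (snd X)) r1 y) = (\<lambda>x\<in>fst (snd Y). x)"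
      using M_bij[OF XY(3)]
      by (simp_all add: compose_inv_into_id compose_id_inv_into bij_betw_imp_surj_on)
    ultimately show ?thesis
      by (intro bexI[of _ ?g]) (simp_all add: f gid_eq)
  qed
qed

lemma igroupoid: "igroupoid G"
  unfolding igroupoid_def is_functor_def fst_conv snd_conv
proof (intro conjI ballI impI groupoid)
  fix X assume "X \<in> gob G"
  then show "sob G X \<in> gob G" "sob G (sob G X) = X" "sar G (gid G X) = gid G (sob G X)"
    by (simp_all add: sob_ob sob_sob gid_eq sob_fst sob_fst_snd)
next
  fix f assume "f \<in> gar G"
  then show "sar G f \<in> ghom G (sob G (gdom G f)) (sob G (gcod G f))" "sar G (sar G f) = f"
    by (elim garE; simp add: ghom_def gar_iff sob_ob sob_sob M_sob)+
next
  fix f g assume "f \<in> gar G" "g \<in> gar G" "gcod G f = gdom G g"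
  then show "sar G (gcomp G g f) = gcomp G (sar G g) (sar G f)"
    by (elim garE) (simp add: sob_fst sob_fst_snd)
qed

lemma ghom_eq:
  "g \<in> ghom G X Y \<longleftrightarrow> g = (X, Y, rho0 g, rho1 g) \<and> X \<in> gob G \<and> Y \<in> gob G \<and> M X Y (rho0 g) (rho1 g)"
  by (cases g) (auto simp: ghom_def gar_iff)

lemma rho_gcomp:
  "rho0 (gcomp G g f) = compose (fst (gdom G f)) (rho0 g) (rho0 f)"
  "rho1 (gcomp G g f) = compose (fst (snd (gdom G f))) (rho1 g) (rho1 f)"
  by (cases f; cases g; simp)+

lemma rho_gid: "rho0 (gid G X) = (\<lambda>x\<in>fst X. x)"
  by (simp add: gid_eq)

lemma rho_sar: "rho0 (sar G g) = rho1 g" "rho1 (sar G g) = rho0 g"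
  by (cases g; simp)+

end

lemma U_mor_iff [simp]: "U_mor (A0, A1, \<phi>) (B0, B1, \<psi>) r0 r1 \<longleftrightarrow>
     bij_betw r0 A0 B0 \<and> r0 \<in> extensional A0 \<and> bij_betw r1 A1 B1 \<and> r1 \<in> extensional A1 \<and>
     (\<forall>x \<in> A0. \<psi> (r0 x) = r1 (\<phi> x))"
  by (simp add: U_mor_def)

lemma U_ob_iff [simp]: "(A0, A1, \<phi>) \<in> U_ob \<kappa> \<longleftrightarrow>
     ordLess2 (card_of A0) \<kappa> \<and> ordLess2 (card_of A1) \<kappa> \<and> bij_betw \<phi> A0 A1 \<and> \<phi> \<in> extensional A0"
  by (simp add: U_ob_def)

lemma U_sob_eq [simp]: "U_sob (A0, A1, \<phi>) = (A1, A0, \<lambda>y\<in>A1. inv_into A0 \<phi> y)"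
  by (simp add: U_sob_def)

lemma U_mor_comp:
  assumes "X \<in> U_ob \<kappa>" "U_mor X Y r0 r1" "U_mor Y Z s0 s1"
  shows "U_mor X Z (compose (fst X) s0 r0) (compose (fst (snd X)) s1 r1)"
  using assms by (cases X; cases Y; cases Z) (auto simp: bij_betw_compose compose_eq bij_betwE)

lemma U_mor_inv:
  assumes "X \<in> U_ob \<kappa>" "U_mor X Y r0 r1"
  shows "U_mor Y X (\<lambda>y\<in>fst Y. inv_into (fst X) r0 y) (\<lambda>y\<in>fst (snd Y). inv_into (fst (snd X)) r1 y)"
proof -
  obtain A0 A1 \<phi> B0 B1 \<psi> where XY: "X = (A0, A1, \<phi>)" "Y = (B0, B1, \<psi>)" by (cases X; cases Y)
  have "bij_betw \<phi> A0 A1" "bij_betw r0 A0 B0" "bij_betw r1 A1 B1" "\<forall>x\<in>A0. \<psi> (r0 x) = r1 (\<phi> x)"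
    using assms by (simp_all add: XY)
  moreover from this have "\<forall>y\<in>B0. \<phi> (inv_into A0 r0 y) = inv_into A1 r1 (\<psi> y)"
    by (intro inv_into_commute) (auto simp: bij_betw_def bij_betw_imp_funcset)
  moreover from calculation have "\<psi> y \<in> B1" if "y \<in> B0" for y
    using that by (auto simp: bij_betw_def)
  ultimately show ?thesis
    by (auto simp: XY bij_betw_inv_into bij_betwE)
qed

lemma U_mor_sob:
  assumes "X \<in> U_ob \<kappa>" "Y \<in> U_ob \<kappa>" "U_mor X Y r0 r1"
  shows "U_mor (U_sob X) (U_sob Y) r1 r0"
proof -
  obtain A0 A1 \<phi> B0 B1 \<psi> where XY: "X = (A0, A1, \<phi>)" "Y = (B0, B1, \<psi>)" by (cases X; cases Y)
  have "bij_betw \<phi> A0 A1" "bij_betw \<psi> B0 B1" "bij_betw r0 A0 B0" "\<forall>x\<in>A0. \<psi> (r0 x) = r1 (\<phi> x)"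
    using assms by (simp_all add: XY)
  then have "\<forall>y\<in>A1. r0 (inv_into A0 \<phi> y) = inv_into B0 \<psi> (r1 y)"
    by (intro inv_into_commute) (auto simp: bij_betw_def bij_betw_imp_funcset)
  with assms show ?thesis by (auto simp: XY bij_betwE)
qed

lemma U_mor_commute: "U_mor X Y r0 r1 \<Longrightarrow> a \<in> fst X \<Longrightarrow> snd (snd Y) (r0 a) = r1 (snd (snd X) a)"
  by (cases X; cases Y) simp

interpretation U: bijection_igroupoid "U_Delta \<kappa>" U_mor for \<kappa>
proof unfold_locales
  fix X Y :: "'u uobj" and r0 r1 assume "U_mor X Y r0 r1"
  then show "bij_betw r0 (fst X) (fst Y) \<and> r0 \<in> extensional (fst X) \<and>
      bij_betw r1 (fst (snd X)) (fst (snd Y)) \<and> r1 \<in> extensional (fst (snd X))"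
    by (cases X; cases Y) simp
next
  fix X :: "'u uobj" assume X: "X \<in> gob (U_Delta \<kappa>)"
  then show "U_mor X X (\<lambda>x\<in>fst X. x) (\<lambda>x\<in>fst (snd X). x)"
    by (cases X) (auto simp: U_Delta_def bij_betwE bij_betw_id[unfolded id_def])
  show "sob (U_Delta \<kappa>) X \<in> gob (U_Delta \<kappa>)" "sob (U_Delta \<kappa>) (sob (U_Delta \<kappa>) X) = X"
    using X by (cases X; simp add: U_Delta_def bij_betw_inv_into restrict_inv_into_inv_into)+
next
  fix X :: "'u uobj"
  show "fst (sob (U_Delta \<kappa>) X) = fst (snd X)" "fst (snd (sob (U_Delta \<kappa>) X)) = fst X"
    by (cases X; simp add: U_Delta_def)+
qed (auto simp: U_Delta_def U_ar_def restrict_comp_eq_compose restrict_id_eq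
       intro: U_mor_comp U_mor_inv U_mor_sob)

definition the_pt :: "'u tobj \<Rightarrow> 'u" where
  "the_pt X = fst (snd (snd X))"

definition Ut_mor :: "'u tobj \<Rightarrow> 'u tobj \<Rightarrow> ('u \<Rightarrow> 'u) \<Rightarrow> ('u \<Rightarrow> 'u) \<Rightarrow> bool" where
  "Ut_mor X Y r0 r1 \<longleftrightarrow> U_mor (forget_pt X) (forget_pt Y) r0 r1 \<and> r0 (the_pt X) = the_pt Y"

lemma forget_pt_eq [simp]: "forget_pt (A0, A1, a, \<phi>) = (A0, A1, \<phi>)"
  by (simp add: forget_pt_def)

lemma the_pt_eq [simp]: "the_pt (A0, A1, a, \<phi>) = a"
  by (simp add: the_pt_def)

lemma Ut_ob_iff [simp]: "(A0, A1, a, \<phi>) \<in> Ut_ob \<kappa> \<longleftrightarrow> (A0, A1, \<phi>) \<in> U_ob \<kappa> \<and> a \<in> A0"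
  by (simp add: Ut_ob_def)

lemma Ut_sob_eq [simp]: "Ut_sob (A0, A1, a, \<phi>) = (A1, A0, \<phi> a, \<lambda>y\<in>A1. inv_into A0 \<phi> y)"
  by (simp add: Ut_sob_def)

lemma forget_pt_carriers [simp]: "fst (forget_pt X) = fst X" "fst (snd (forget_pt X)) = fst (snd X)"
  by (cases X; simp)+

lemma forget_pt_Ut_sob: "forget_pt (Ut_sob X) = U_sob (forget_pt X)"
  by (cases X) simp

lemma forget_pt_Ut_ob: "X \<in> Ut_ob \<kappa> \<Longrightarrow> forget_pt X \<in> U_ob \<kappa>"
  by (cases X) simp

lemma Ut_ar_eq: "Ut_ar \<kappa> = {(X, Y, r0, r1). X \<in> Ut_ob \<kappa> \<and> Y \<in> Ut_ob \<kappa> \<and> Ut_mor X Y r0 r1}"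
  by (auto simp: Ut_ar_def Ut_mor_def Ut_ob_def)

interpretation Ut: bijection_igroupoid "Ut_Delta \<kappa>" Ut_mor for \<kappa>
proof unfold_locales
  fix X Y :: "'u tobj" and r0 r1 assume "Ut_mor X Y r0 r1"
  then show "bij_betw r0 (fst X) (fst Y) \<and> r0 \<in> extensional (fst X) \<and>
      bij_betw r1 (fst (snd X)) (fst (snd Y)) \<and> r1 \<in> extensional (fst (snd X))"
    by (cases X; cases Y) (simp add: Ut_mor_def)
next
  fix X :: "'u tobj" assume X: "X \<in> gob (Ut_Delta \<kappa>)"
  then show "Ut_mor X X (\<lambda>x\<in>fst X. x) (\<lambda>x\<in>fst (snd X). x)"
    by (cases X) (auto simp: Ut_Delta_def Ut_mor_def bij_betwE bij_betw_id[unfolded id_def])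
  obtain A0 A1 a \<phi> where X': "X = (A0, A1, a, \<phi>)" by (cases X)
  have "bij_betw \<phi> A0 A1" "\<phi> \<in> extensional A0" "a \<in> A0"
    using X by (simp_all add: X' Ut_Delta_def)
  then show "sob (Ut_Delta \<kappa>) X \<in> gob (Ut_Delta \<kappa>)" "sob (Ut_Delta \<kappa>) (sob (Ut_Delta \<kappa>) X) = X"
    using X by (simp_all add: X' Ut_Delta_def bij_betw_inv_into restrict_inv_into_inv_into
        bij_betwE bij_betw_inv_into_left)
next
  fix X Y Z :: "'u tobj" and r0 r1 s0 s1
  assume "X \<in> gob (Ut_Delta \<kappa>)" "Ut_mor X Y r0 r1" "Ut_mor Y Z s0 s1"
  then show "Ut_mor X Z (compose (fst X) s0 r0) (compose (fst (snd X)) s1 r1)"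
    using U_mor_comp[of "forget_pt X" \<kappa> "forget_pt Y" r0 r1 "forget_pt Z" s0 s1]
    by (cases X) (simp add: Ut_Delta_def Ut_mor_def compose_eq)
next
  fix X Y :: "'u tobj" and r0 r1
  assume "X \<in> gob (Ut_Delta \<kappa>)" "Ut_mor X Y r0 r1"
  then show "Ut_mor Y X (\<lambda>y\<in>fst Y. inv_into (fst X) r0 y) (\<lambda>y\<in>fst (snd Y). inv_into (fst (snd X)) r1 y)"
    using U_mor_inv[of "forget_pt X" \<kappa> "forget_pt Y" r0 r1]
    by (cases X; cases Y) (clarsimp simp: Ut_Delta_def Ut_mor_def bij_betwE bij_betw_inv_into_left)
next
  fix X Y :: "'u tobj" and r0 r1
  assume "X \<in> gob (Ut_Delta \<kappa>)" "Y \<in> gob (Ut_Delta \<kappa>)" "Ut_mor X Y r0 r1"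
  then show "Ut_mor (sob (Ut_Delta \<kappa>) X) (sob (Ut_Delta \<kappa>) Y) r1 r0"
    using U_mor_sob[of "forget_pt X" \<kappa> "forget_pt Y" r0 r1]
    by (cases X; cases Y) (simp add: Ut_Delta_def Ut_mor_def)
next
  fix X :: "'u tobj"
  show "fst (sob (Ut_Delta \<kappa>) X) = fst (snd X)" "fst (snd (sob (Ut_Delta \<kappa>) X)) = fst X"
    by (cases X; simp add: Ut_Delta_def)+
qed (auto simp: Ut_Delta_def Ut_ar_eq restrict_comp_eq_compose restrict_id_eq)

lemma Delta_simps [simp]:
  "gob (U_Delta \<kappa>) = U_ob \<kappa>" "sob (U_Delta \<kappa>) = U_sob"
  "gob (Ut_Delta \<kappa>) = Ut_ob \<kappa>" "sob (Ut_Delta \<kappa>) = Ut_sob"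
  by (simp_all add: U_Delta_def Ut_Delta_def)

lemma p_Delta_simps [simp]:
  "fst p_Delta = forget_pt" "snd p_Delta (X, Y, r0, r1) = (forget_pt X, forget_pt Y, r0, r1)"
  by (simp_all add: p_Delta_def)

lemma p_Delta_igpd_mor: "igpd_mor (Ut_Delta \<kappa>) (U_Delta \<kappa>) p_Delta"
  unfolding igpd_mor_def is_functor_def
proof (intro conjI ballI impI Ut.igroupoid U.igroupoid)
  fix X :: "'u tobj" assume "X \<in> gob (Ut_Delta \<kappa>)"
  then show "fst p_Delta X \<in> gob (U_Delta \<kappa>)"
    "snd p_Delta (gid (Ut_Delta \<kappa>) X) = gid (U_Delta \<kappa>) (fst p_Delta X)"
    "fst p_Delta (sob (Ut_Delta \<kappa>) X) = sob (U_Delta \<kappa>) (fst p_Delta X)"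
    by (cases X; simp add: U.gid_eq Ut.gid_eq)+
next
  fix f :: "'u tarr" assume "f \<in> gar (Ut_Delta \<kappa>)"
  then obtain X Y r0 r1 where f: "f = (X, Y, r0, r1)" "X \<in> Ut_ob \<kappa>" "Y \<in> Ut_ob \<kappa>" "Ut_mor X Y r0 r1"
    by (elim Ut.garE) simp
  then show "snd p_Delta f \<in> ghom (U_Delta \<kappa>) (fst p_Delta (gdom (Ut_Delta \<kappa>) f)) (fst p_Delta (gcod (Ut_Delta \<kappa>) f))"
    "snd p_Delta (sar (Ut_Delta \<kappa>) f) = sar (U_Delta \<kappa>) (snd p_Delta f)"
    by (simp_all add: ghom_def U.gar_iff Ut_mor_def forget_pt_Ut_ob forget_pt_Ut_sob)
next
  fix f g :: "'u tarr" assume "f \<in> gar (Ut_Delta \<kappa>)" "g \<in> gar (Ut_Delta \<kappa>)"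
  then show "snd p_Delta (gcomp (Ut_Delta \<kappa>) g f) = gcomp (U_Delta \<kappa>) (snd p_Delta g) (snd p_Delta f)"
    by (elim Ut.garE) simp
qed

definition add_pt :: "'u uobj \<Rightarrow> 'u \<Rightarrow> 'u tobj" where
  "add_pt X a = (fst X, fst (snd X), a, snd (snd X))"

lemma add_pt_simps [simp]:
  "forget_pt (add_pt X a) = X" "the_pt (add_pt X a) = a"
  "fst (add_pt X a) = fst X" "fst (snd (add_pt X a)) = fst (snd X)"
  by (cases X; simp add: add_pt_def)+

lemma Ut_ob_iff_forget_pt: "Y \<in> Ut_ob \<kappa> \<longleftrightarrow> forget_pt Y \<in> U_ob \<kappa> \<and> the_pt Y \<in> fst Y"
  by (cases Y) simp

lemma rho_p_Delta: "rho0 (snd p_Delta g) = rho0 g" "rho1 (snd p_Delta g) = rho1 g"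
  by (cases g; simp)+

lemma the_pt_Ut_sob: "the_pt (Ut_sob Y) = snd (snd (forget_pt Y)) (the_pt Y)"
  by (cases Y) simp

lemma add_pt_Ut_ob_iff: "add_pt X a \<in> Ut_ob \<kappa> \<longleftrightarrow> X \<in> U_ob \<kappa> \<and> a \<in> fst X"
  by (cases X) (simp add: add_pt_def)

lemma Ut_sob_add_pt: "Ut_sob (add_pt X a) = add_pt (U_sob X) (snd (snd X) a)"
  by (cases X) (simp add: add_pt_def)

lemma add_pt_forget_pt: "add_pt (forget_pt Y) (the_pt Y) = Y"
  by (cases Y) (simp add: add_pt_def)

text \<open>A point in every fibre of v, transported by the arrows of B and compatible with the
  involution, is exactly what is needed to lift v through p_Delta.\<close>

definition point_section where
  "point_section B v s \<longleftrightarrow> (\<forall>y \<in> gob B. s y \<in> fst (fst v y)) \<and>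
     (\<forall>g \<in> gar B. rho0 (snd v g) (s (gdom B g)) = s (gcod B g)) \<and>
     (\<forall>y \<in> gob B. s (sob B y) = snd (snd (fst v y)) (s y))"

definition pointed_lift where
  "pointed_lift B v s =
     (\<lambda>y. add_pt (fst v y) (s y),
      \<lambda>g. (add_pt (fst v (gdom B g)) (s (gdom B g)), add_pt (fst v (gcod B g)) (s (gcod B g)),
            rho0 (snd v g), rho1 (snd v g)))"

lemma pointed_lift_igpd_mor:
  assumes v: "igpd_mor B (U_Delta \<kappa>) v" and s: "point_section B v s"
  shows "igpd_mor B (Ut_Delta \<kappa>) (pointed_lift B v s)"
proof -
  have B: "groupoid B" "is_functor B B (sob B, sar B)" and vF: "is_functor B (U_Delta \<kappa>) v"
    using v by (simp_all add: igpd_mor_def igroupoid_def)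
  have v_hom: "snd v g \<in> ghom (U_Delta \<kappa>) (fst v (gdom B g)) (fst v (gcod B g))" if "g \<in> gar B" for g
    using functor_hom[OF vF ghom_gdom_gcod[OF that]] .
  have v_ob: "fst v y \<in> U_ob \<kappa>" if "y \<in> gob B" for y
    using functor_ob[OF vF that] by simp
  have s_in: "s y \<in> fst (fst v y)" if "y \<in> gob B" for y
    using s that by (simp add: point_section_def)
  let ?h = "pointed_lift B v s"
  have "is_functor B (Ut_Delta \<kappa>) ?h"
    unfolding is_functor_def
  proof (intro conjI ballI impI)
    fix y assume y: "y \<in> gob B"
    then show "fst ?h y \<in> gob (Ut_Delta \<kappa>)"
      using v_ob s_in by (simp add: pointed_lift_def add_pt_Ut_ob_iff)
    show "snd ?h (gid B y) = gid (Ut_Delta \<kappa>) (fst ?h y)"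
      using groupoid_id_hom[OF B(1) y] functor_id[OF vF y]
      by (simp add: pointed_lift_def ghom_iff U.gid_eq Ut.gid_eq)
  next
    fix g assume g: "g \<in> gar B"
    have "gdom B g \<in> gob B" "gcod B g \<in> gob B"
      using groupoid_hom_obs[OF B(1) ghom_gdom_gcod[OF g]] by simp_all
    then show "snd ?h g \<in> ghom (Ut_Delta \<kappa>) (fst ?h (gdom B g)) (fst ?h (gcod B g))"
      using v_hom[OF g] s_in s g
      by (simp add: pointed_lift_def Ut.ghom_eq U.ghom_eq add_pt_Ut_ob_iff Ut_mor_def point_section_def)
  next
    fix f g assume fg: "f \<in> gar B" "g \<in> gar B" "gcod B f = gdom B g"
    then have "gcomp B g f \<in> ghom B (gdom B f) (gcod B g)"
      using groupoid_comp_hom[OF B(1)] ghom_gdom_gcod by metis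
    moreover have "snd v (gcomp B g f) = gcomp (U_Delta \<kappa>) (snd v g) (snd v f)"
      using functor_comp[OF vF] ghom_gdom_gcod fg by metis
    ultimately show "snd ?h (gcomp B g f) = gcomp (Ut_Delta \<kappa>) (snd ?h g) (snd ?h f)"
      using v_hom[OF fg(1)] fg(3)
      by (simp add: pointed_lift_def ghom_iff U.rho_gcomp)
  qed
  moreover have "fst ?h (sob B y) = sob (Ut_Delta \<kappa>) (fst ?h y)" if "y \<in> gob B" for y
    using v that s by (simp add: pointed_lift_def igpd_mor_def point_section_def Ut_sob_add_pt)
  moreover have "snd ?h (sar B g) = sar (Ut_Delta \<kappa>) (snd ?h g)" if g: "g \<in> gar B" for g
  proof -
    have "sar B g \<in> ghom B (sob B (gdom B g)) (sob B (gcod B g))"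
      using functor_hom[OF B(2) ghom_gdom_gcod[OF g]] by simp
    moreover have "snd v (sar B g) = sar (U_Delta \<kappa>) (snd v g)"
      using v g by (simp add: igpd_mor_def)
    moreover have "gdom B g \<in> gob B" "gcod B g \<in> gob B"
      using groupoid_hom_obs[OF B(1) ghom_gdom_gcod[OF g]] by simp_all
    ultimately show ?thesis
      using v s by (simp add: pointed_lift_def ghom_iff igpd_mor_def point_section_def
          Ut_sob_add_pt U.rho_sar)
  qed
  ultimately show ?thesis
    using v by (simp add: igpd_mor_def Ut.igroupoid)
qed

lemma p_Delta_pointed_lift:
  assumes v: "igpd_mor B (U_Delta \<kappa>) v"
  shows "fst p_Delta (fst (pointed_lift B v s) y) = fst v y"
    and "g \<in> gar B \<Longrightarrow> snd p_Delta (snd (pointed_lift B v s) g) = snd v g"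
proof -
  show "fst p_Delta (fst (pointed_lift B v s) y) = fst v y"
    by (simp add: pointed_lift_def)
  assume "g \<in> gar B"
  then have "snd v g \<in> ghom (U_Delta \<kappa>) (fst v (gdom B g)) (fst v (gcod B g))"
    using v functor_hom ghom_gdom_gcod by (metis igpd_mor_def)
  then show "snd p_Delta (snd (pointed_lift B v s) g) = snd v g"
    by (subst (2) U.ghom_eq[THEN iffD1, THEN conjunct1]) (simp_all add: pointed_lift_def)
qed

locale lifting_problem =
  fixes \<kappa> :: "'k rel" and A :: "('ao, 'aa) igpd" and B :: "('bo, 'ba) igpd"
    and i :: "('ao \<Rightarrow> 'bo) \<times> ('aa \<Rightarrow> 'ba)"
    and u :: "('ao \<Rightarrow> 'u tobj) \<times> ('aa \<Rightarrow> 'u tarr)"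
    and v :: "('bo \<Rightarrow> 'u uobj) \<times> ('ba \<Rightarrow> 'u uarr)"
    and src :: "'bo \<Rightarrow> 'ao" and e :: "'bo \<Rightarrow> 'ba"
  assumes i: "igpd_mor A B i" and i_full: "full_functor A B i"
    and src: "y \<in> gob B \<Longrightarrow> src y \<in> gob A"
    and e: "y \<in> gob B \<Longrightarrow> e y \<in> ghom B (fst i (src y)) y"
    and u: "igpd_mor A (Ut_Delta \<kappa>) u" and v: "igpd_mor B (U_Delta \<kappa>) v"
    and square_ob: "x \<in> gob A \<Longrightarrow> fst p_Delta (fst u x) = fst v (fst i x)"
    and square_ar: "f \<in> gar A \<Longrightarrow> snd p_Delta (snd u f) = snd v (snd i f)"
begin

definition transported_pt :: "'bo \<Rightarrow> 'u" where
  "transported_pt y = rho0 (snd v (e y)) (the_pt (fst u (src y)))"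

lemma A_groupoid: "groupoid A" and B_groupoid: "groupoid B" and i_functor: "is_functor A B i"
  and u_functor: "is_functor A (Ut_Delta \<kappa>) u" and v_functor: "is_functor B (U_Delta \<kappa>) v"
  using i u v by (simp_all add: igpd_mor_def igroupoid_def)

lemma u_ob:
  assumes "x \<in> gob A"
  shows "fst u x = add_pt (fst v (fst i x)) (the_pt (fst u x))"
    and "the_pt (fst u x) \<in> fst (fst v (fst i x))"
proof -
  have "fst u x \<in> Ut_ob \<kappa>" using functor_ob[OF u_functor assms] by simp
  then show "the_pt (fst u x) \<in> fst (fst v (fst i x))"
    using square_ob[OF assms] forget_pt_carriers(1)[of "fst u x"] by (simp add: Ut_ob_iff_forget_pt)
  show "fst u x = add_pt (fst v (fst i x)) (the_pt (fst u x))"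
    using square_ob[OF assms] add_pt_forget_pt[of "fst u x"] by simp
qed

lemma v_hom: "g \<in> ghom B y y' \<Longrightarrow> snd v g \<in> ghom (U_Delta \<kappa>) (fst v y) (fst v y')"
  by (rule functor_hom[OF v_functor])

lemma v_U_mor: "g \<in> ghom B y y' \<Longrightarrow> U_mor (fst v y) (fst v y') (rho0 (snd v g)) (rho1 (snd v g))"
  using v_hom U.ghom_eq by blast

lemma v_rho0_comp:
  assumes f: "f \<in> ghom B y1 y2" and g: "g \<in> ghom B y2 y3" and a: "a \<in> fst (fst v y1)"
  shows "rho0 (snd v (gcomp B g f)) a = rho0 (snd v g) (rho0 (snd v f) a)"
  using functor_comp[OF v_functor f g] v_hom[OF f] a by (simp add: U.rho_gcomp ghom_iff compose_eq)

lemma transport_along_i: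
  assumes k: "k \<in> ghom A x x'"
  shows "rho0 (snd v (snd i k)) (the_pt (fst u x)) = the_pt (fst u x')"
proof -
  have "snd u k \<in> ghom (Ut_Delta \<kappa>) (fst u x) (fst u x')" using functor_hom[OF u_functor k] .
  then have "rho0 (snd u k) (the_pt (fst u x)) = the_pt (fst u x')"
    by (simp add: Ut.ghom_eq Ut_mor_def)
  moreover have "rho0 (snd v (snd i k)) = rho0 (snd p_Delta (snd u k))"
    using square_ar[of k] k by (simp add: ghom_iff)
  ultimately show ?thesis by (simp add: rho_p_Delta)
qed

text \<open>Fullness of i makes the transported point independent of the chosen arrow into y.\<close>

lemma transport_consistent:
  assumes x: "x \<in> gob A" and g: "g \<in> ghom B (fst i x) y"
  shows "rho0 (snd v g) (the_pt (fst u x)) = transported_pt y"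
proof -
  have y: "y \<in> gob B" using groupoid_hom_obs[OF B_groupoid g] by simp
  obtain f where f: "f \<in> ghom B (fst i x) (fst i (src y))" and gf: "g = gcomp B (e y) f"
    using groupoid_cancel_left_inverse[OF B_groupoid e[OF y] g] .
  obtain k where k: "k \<in> ghom A x (src y)" and ik: "snd i k = f"
    using i_full x src[OF y] f unfolding full_functor_def by blast
  have "rho0 (snd v g) (the_pt (fst u x)) = rho0 (snd v (e y)) (rho0 (snd v f) (the_pt (fst u x)))"
    unfolding gf using v_rho0_comp[OF f e[OF y] u_ob(2)[OF x]] .
  also have "\<dots> = transported_pt y"
    using transport_along_i[OF k] by (simp add: ik transported_pt_def)
  finally show ?thesis .
qed

lemma transported_pt_in: "y \<in> gob B \<Longrightarrow> transported_pt y \<in> fst (fst v y)"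
proof -
  assume y: "y \<in> gob B"
  have "bij_betw (rho0 (snd v (e y))) (fst (fst v (fst i (src y)))) (fst (fst v y))"
    using U.M_bij[OF v_U_mor[OF e[OF y]]] by simp
  then show ?thesis
    using u_ob(2)[OF src[OF y]] unfolding transported_pt_def by (blast dest: bij_betwE)
qed

lemma transported_pt_hom:
  assumes g: "g \<in> ghom B y y'"
  shows "rho0 (snd v g) (transported_pt y) = transported_pt y'"
proof -
  have y: "y \<in> gob B" using groupoid_hom_obs[OF B_groupoid g] by simp
  have "rho0 (snd v g) (transported_pt y) = rho0 (snd v (gcomp B g (e y))) (the_pt (fst u (src y)))"
    unfolding transported_pt_def using v_rho0_comp[OF e[OF y] g u_ob(2)[OF src[OF y]]] by simp
  also have "\<dots> = transported_pt y'"
    using transport_consistent[OF src[OF y] groupoid_comp_hom[OF B_groupoid e[OF y] g]] .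
  finally show ?thesis .
qed

lemma transported_pt_sob:
  assumes y: "y \<in> gob B"
  shows "transported_pt (sob B y) = snd (snd (fst v y)) (transported_pt y)"
proof -
  define x where "x = src y"
  have x: "x \<in> gob A" and ey: "e y \<in> ghom B (fst i x) y" using src[OF y] e[OF y] by (simp_all add: x_def)
  have "sar B (e y) \<in> ghom B (sob B (fst i x)) (sob B y)"
    using functor_hom[OF _ ey, of B "(sob B, sar B)"] i by (simp add: igpd_mor_def igroupoid_def)
  moreover have "sob B (fst i x) = fst i (sob A x)" using i x by (simp add: igpd_mor_def)
  moreover have "sob A x \<in> gob A" using i x by (simp add: igpd_mor_def igroupoid_def is_functor_def)
  ultimately have "transported_pt (sob B y) = rho0 (snd v (sar B (e y))) (the_pt (fst u (sob A x)))"
    using transport_consistent by simp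
  also have "\<dots> = rho1 (snd v (e y)) (snd (snd (fst v (fst i x))) (the_pt (fst u x)))"
    using u v x ey square_ob[OF x]
    by (simp add: igpd_mor_def ghom_iff U.rho_sar the_pt_Ut_sob)
  also have "\<dots> = snd (snd (fst v y)) (transported_pt y)"
    using U_mor_commute[OF v_U_mor[OF ey] u_ob(2)[OF x]] by (simp add: transported_pt_def x_def)
  finally show ?thesis .
qed

lemma transported_pt_point_section: "point_section B v transported_pt"
  unfolding point_section_def
  using transported_pt_in transported_pt_hom[OF ghom_gdom_gcod] transported_pt_sob by blast

lemma pointed_lift_i_ob:
  assumes x: "x \<in> gob A"
  shows "fst (pointed_lift B v transported_pt) (fst i x) = fst u x"
proof -
  have ix: "fst i x \<in> gob B" using functor_ob[OF i_functor x] .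
  have "transported_pt (fst i x) = rho0 (snd v (gid B (fst i x))) (the_pt (fst u x))"
    using transport_consistent[OF x groupoid_id_hom[OF B_groupoid ix]] by simp
  also have "\<dots> = the_pt (fst u x)"
    using functor_id[OF v_functor ix] u_ob(2)[OF x] by (simp add: U.rho_gid)
  finally show ?thesis
    using u_ob(1)[OF x] by (simp add: pointed_lift_def)
qed

lemma pointed_lift_i_ar:
  assumes f: "f \<in> gar A"
  shows "snd (pointed_lift B v transported_pt) (snd i f) = snd u f"
proof -
  have f': "f \<in> ghom A (gdom A f) (gcod A f)" using ghom_gdom_gcod[OF f] .
  have obs: "gdom A f \<in> gob A" "gcod A f \<in> gob A" using groupoid_hom_obs[OF A_groupoid f'] by simp_all
  have "snd i f \<in> ghom B (fst i (gdom A f)) (fst i (gcod A f))" using functor_hom[OF i_functor f'] .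
  moreover have "snd u f = (fst u (gdom A f), fst u (gcod A f), rho0 (snd u f), rho1 (snd u f))"
    using functor_hom[OF u_functor f'] Ut.ghom_eq by blast
  moreover have "rho0 (snd v (snd i f)) = rho0 (snd u f)" "rho1 (snd v (snd i f)) = rho1 (snd u f)"
    using square_ar[OF f] rho_p_Delta[of "snd u f"] by simp_all
  ultimately show ?thesis
    using pointed_lift_i_ob[OF obs(1)] pointed_lift_i_ob[OF obs(2)]
    by (simp add: pointed_lift_def ghom_iff)
qed

end

text \<open>The hypothesis on kappa only makes U_Delta a small groupoid; the lifting does not use it.\<close>

theorem lemma5p14:
  fixes \<kappa> :: "'k rel"
    and A :: "('ao, 'aa) igpd" and B :: "('bo, 'ba) igpd"
    and i :: "('ao \<Rightarrow> 'bo) \<times> ('aa \<Rightarrow> 'ba)"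
  assumes "inaccessible \<kappa>"
  shows "igpd_mor (Ut_Delta \<kappa> :: ('u tobj, 'u tarr) igpd) (U_Delta \<kappa>) p_Delta \<and>
         (inj_equiv A B i \<longrightarrow> has_rlp A B i (Ut_Delta \<kappa> :: ('u tobj, 'u tarr) igpd) (U_Delta \<kappa>) p_Delta)"
proof (intro conjI impI)
  show "igpd_mor (Ut_Delta \<kappa> :: ('u tobj, 'u tarr) igpd) (U_Delta \<kappa>) p_Delta"
    by (rule p_Delta_igpd_mor)
  assume "inj_equiv A B i"
  then have i: "igpd_mor A B i" and equiv: "gpd_equivalence A B i"
    by (simp_all add: inj_equiv_def)
  then have full: "full_functor A B i"
    by (intro equivalence_full) (simp_all add: igpd_mor_def igroupoid_def)
  obtain K \<epsilon> where K: "is_functor B A K" and \<epsilon>: "nat_iso B B (fcomp i K) (id, id) \<epsilon>"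
    using equiv unfolding gpd_equivalence_def by blast
  show "has_rlp A B i (Ut_Delta \<kappa> :: ('u tobj, 'u tarr) igpd) (U_Delta \<kappa>) p_Delta"
    unfolding has_rlp_def
  proof (intro allI impI)
    fix u :: "('ao \<Rightarrow> 'u tobj) \<times> ('aa \<Rightarrow> 'u tarr)" and v :: "('bo \<Rightarrow> 'u uobj) \<times> ('ba \<Rightarrow> 'u uarr)"
    assume "igpd_mor A (Ut_Delta \<kappa>) u" "igpd_mor B (U_Delta \<kappa>) v"
      "\<forall>x \<in> gob A. fst p_Delta (fst u x) = fst v (fst i x)"
      "\<forall>f \<in> gar A. snd p_Delta (snd u f) = snd v (snd i f)"
    then interpret lifting_problem \<kappa> A B i u v "fst K" \<epsilon>
      using i full functor_ob[OF K] nat_iso_hom[OF \<epsilon>] by unfold_locales simp_all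
    show "\<exists>h. igpd_mor B (Ut_Delta \<kappa>) h \<and>
           (\<forall>x \<in> gob A. fst h (fst i x) = fst u x) \<and>
           (\<forall>f \<in> gar A. snd h (snd i f) = snd u f) \<and>
           (\<forall>y \<in> gob B. fst p_Delta (fst h y) = fst v y) \<and>
           (\<forall>g \<in> gar B. snd p_Delta (snd h g) = snd v g)"
      using pointed_lift_igpd_mor[OF v transported_pt_point_section]
        pointed_lift_i_ob pointed_lift_i_ar p_Delta_pointed_lift[OF v]
      by blast
  qed
qed

end
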